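(* For $k\in\mathbb{N}$ let $H_k$ be the restriction to $S^2=\{x\in\mathbb{R}^3:|x|=1\}$ of the harmonic polynomial $k^{1/4}(x_1+ix_2)^k$ (an eigenfunction of $-\Delta_{S^2}$ with eigenvalue $k(k+1)$ and $\|H_k\|_{L^2(S^2)}\approx1$). For each $\alpha\in(1,2)$ there exist an $\alpha$-dimensional probability measure $\mu$ on $S^2$ and an increasing sequence of natural numbers $\{k_n\}$ such that for every $p\ge2$, $$\|H_{k_n}\|_{L^p(S^2;d\mu)}\approx k_n^{\frac14-\frac{\alpha-1}{2p}},$$ with implicit constants depending on $\alpha$ and $p$ but not on $n$.
   Context: A Borel probability measure $\mu$ on $S^2$ (round metric) is $\alpha$-dimensional if there is $C>0$ with $\mu(B(x,r))\le Cr^\alpha$ for all $x\in S^2$ and all $0<r<\mathrm{inj}\,S^2$, $B(x,r)$ the geodesic ball. $A\approx B$ means $C^{-1}B\le A\le CB$. *)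

theory Defs
  imports "HOL-Analysis.Analysis" "HOL-Probability.Probability"
begin

definition S2 :: "(real^3) set" where
  "S2 = sphere 0 1"

definition gdist :: "real^3 \<Rightarrow> real^3 \<Rightarrow> real" where
  "gdist x y = arccos (max (-1) (min 1 (x \<bullet> y)))"

definition gball :: "real^3 \<Rightarrow> real \<Rightarrow> (real^3) set" where
  "gball x r = {y \<in> S2. gdist x y < r}"

text \<open>Borel probability measure on S^2 (injectivity radius of S^2 is pi).\<close>
definition borel_prob_on_S2 :: "(real^3) measure \<Rightarrow> bool" where
  "borel_prob_on_S2 \<mu> \<longleftrightarrow> prob_space \<mu> \<and> sets \<mu> = sets (restrict_space borel S2)"

definition alpha_dimensional :: "(real^3) measure \<Rightarrow> real \<Rightarrow> bool" where
  "alpha_dimensional \<mu> \<alpha> \<longleftrightarrow> borel_prob_on_S2 \<mu> \<and>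
     (\<exists>C>0. \<forall>x\<in>S2. \<forall>r. 0 < r \<and> r < pi \<longrightarrow> measure \<mu> (gball x r) \<le> C * r powr \<alpha>)"

definition H :: "nat \<Rightarrow> real^3 \<Rightarrow> complex" where
  "H k x = complex_of_real (real k powr (1/4)) * (Complex (x$1) (x$2)) ^ k"

definition Lp_norm :: "(real^3) measure \<Rightarrow> real \<Rightarrow> (real^3 \<Rightarrow> complex) \<Rightarrow> real" where
  "Lp_norm \<mu> p f = (\<integral>x. norm (f x) powr p \<partial>\<mu>) powr (1/p)"

end

theory Submission
  imports Defs
begin

text \<open>Take for \<open>\<mu>\<close> the image of Lebesgue measure on \<open>[0,1]\<^sup>2\<close> under
\<open>(v, u) \<mapsto> (\<surd>(1 - u\<^sup>2/4 - v\<^sup>2\<^sup>g/4), u/2, v\<^sup>g/2)\<close> with \<open>g = 1/(\<alpha> - 1)\<close>.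
A geodesic ball of radius \<open>r\<close> is contained in the chordal ball, whose preimage lies in a
rectangle with sides \<open>4r\<close> (in \<open>u\<close>) and \<open>(4r) powr (1/g)\<close> (in \<open>v\<close>, by subadditivity of
\<open>t \<mapsto> t powr (1/g)\<close>); hence \<open>\<mu>\<close> is \<open>(1 + 1/g) = \<alpha>\<close>-dimensional.
On the sphere \<open>|H\<^sub>k|\<^sup>p = k powr (p/4) * (1 - x\<^sub>3\<^sup>2) powr (kp/2)\<close>, which in the chart is
\<open>k powr (p/4) * (1 - v\<^sup>2\<^sup>g/4) powr m\<close> with \<open>m = kp/2\<close>. This is \<open>\<ge> e\<^sup>-\<^sup>1\<^sup>/\<^sup>2 k powr (p/4)\<close>
for \<open>v \<le> m powr (-1/(2g))\<close> and \<open>\<le> 4 k powr (p/4) / (m v\<^sup>2\<^sup>g)\<close> beyond, so the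
\<open>v\<close>-integral is \<open>\<approx> m powr (-1/(2g))\<close> and \<open>\<parallel>H\<^sub>k\<parallel>\<^sub>p\<^sup>p \<approx> k powr (p/4 - (\<alpha> - 1)/2)\<close>.\<close>

lemma powr_add_le_add_powr:
  fixes a b e :: real
  assumes "0 \<le> a" "0 \<le> b" "0 < e" "e \<le> 1"
  shows "(a + b) powr e \<le> a powr e + b powr e"
proof (cases "a + b = 0")
  case True
  then show ?thesis using assms by simp
next
  case False
  have weighted: "x * (a + b) powr (e - 1) \<le> x powr e" if "0 \<le> x" "x \<le> a + b" for x
  proof (cases "x = 0")
    case False
    then have "x * (a + b) powr (e - 1) \<le> x * x powr (e - 1)"
      using that assms by (intro mult_left_mono powr_mono2') auto
    also have "\<dots> = x powr e"
      using that by (simp add: powr_mult_base)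
    finally show ?thesis .
  qed simp
  have "(a + b) powr e = a * (a + b) powr (e - 1) + b * (a + b) powr (e - 1)"
    using assms by (simp add: powr_mult_base flip: distrib_right)
  then show ?thesis
    using weighted[of a] weighted[of b] assms by linarith
qed

lemma powr_in_interval_add:
  fixes s t w e :: real
  assumes "0 \<le> s" "s \<le> t" "t \<le> s + w" "0 \<le> w" "0 < e" "e \<le> 1"
  shows "t powr e \<in> {s powr e .. s powr e + w powr e}"
proof -
  have "t powr e \<le> (s + w) powr e"
    using assms by (intro powr_mono2) auto
  also have "\<dots> \<le> s powr e + w powr e"
    using assms by (intro powr_add_le_add_powr) auto
  finally show ?thesis
    using assms by (auto intro: powr_mono2)
qed

lemma exp_neg_half_le_one_minus_powr:
  fixes q m :: real
  assumes "0 \<le> q" "1 \<le> m" "m * q \<le> 1/4"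
  shows "exp (-1/2) \<le> (1 - q) powr m"
proof -
  have "q \<le> 1/4"
    using assms mult_right_mono[of 1 m q] by linarith
  then have "-q - 2 * q\<^sup>2 \<le> ln (1 - q)"
    using assms by (intro ln_one_minus_pos_lower_bound) auto
  moreover have "2 * q\<^sup>2 \<le> q"
    using mult_right_mono[of "2 * q" 1 q] \<open>q \<le> 1/4\<close> assms by (simp add: power2_eq_square)
  ultimately have "m * (-2 * q) \<le> m * ln (1 - q)"
    using assms by (intro mult_left_mono) auto
  then have "exp (-1/2) \<le> exp (m * ln (1 - q))"
    using assms by simp
  also have "\<dots> = (1 - q) powr m"
    using \<open>q \<le> 1/4\<close> by (simp add: powr_def)
  finally show ?thesis .
qed

lemma one_minus_powr_le_inverse:
  fixes q m :: real
  assumes "0 < q" "q < 1" "0 < m"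
  shows "(1 - q) powr m \<le> 1 / (m * q)"
proof -
  have "m * ln (1 - q) \<le> m * (-q)"
    using assms ln_le_minus_one[of "1 - q"] by (intro mult_left_mono) auto
  then have "(1 - q) powr m \<le> exp (-(m * q))"
    using assms by (simp add: powr_def)
  also have "\<dots> = 1 / exp (m * q)"
    by (simp add: exp_minus divide_inverse)
  also have "\<dots> \<le> 1 / (m * q)"
  proof (rule divide_left_mono)
    show "m * q \<le> exp (m * q)"
      using exp_ge_add_one_self[of "m * q"] by linarith
  qed (use assms in auto)
  finally show ?thesis .
qed

lemma ex_two_sided_bound:
  fixes f y :: "'a \<Rightarrow> real"
  assumes "0 < c" "\<And>n. c * f n \<le> y n" "\<And>n. y n \<le> C * f n" "\<And>n. 0 \<le> f n"
  shows "\<exists>D>0. \<forall>n. inverse D * f n \<le> y n \<and> y n \<le> D * f n"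
proof (intro exI[of _ "max (inverse c) C"] conjI allI)
  show "0 < max (inverse c) C"
    using assms by (simp add: max.strict_coboundedI1)
  have "inverse (max (inverse c) C) \<le> inverse (inverse c)"
    using assms by (intro le_imp_inverse_le) auto
  then show "inverse (max (inverse c) C) * f n \<le> y n" for n
    using assms mult_right_mono by (metis inverse_inverse_eq order.trans)
  show "y n \<le> max (inverse c) C * f n" for n
    using assms mult_right_mono[of C "max (inverse c) C" "f n"] by (meson max.cobounded2 order.trans)
qed

lemma set_integral_powr_neg_Icc:
  fixes a b :: real
  assumes "0 < a" "a \<le> 1" "b \<noteq> 1"
  shows "(LBINT v:{a..1}. v powr (-b)) = (a powr (1 - b) - 1) / (b - 1)"
proof -
  have "(LBINT v:{a..1}. v powr (-b)) = (LBINT v=a..(1::real). v powr (-b))"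
    using interval_integral_Icc[of a 1 "\<lambda>v. v powr (-b)"] assms by simp
  also have "\<dots> = 1 powr (1 - b) / (1 - b) - a powr (1 - b) / (1 - b)"
  proof (rule interval_integral_FTC_finite)
    show "continuous_on {min a 1..max a 1} (\<lambda>v. v powr (-b))"
      using assms by (intro continuous_intros) auto
    fix x assume "min a 1 \<le> x" "x \<le> max a 1"
    then have "0 < x" using assms by auto
    then have "((\<lambda>z. z powr (1 - b) / (1 - b)) has_real_derivative
        (1 - b) * x powr (1 - b - 1) / (1 - b)) (at x)"
      by (intro DERIV_cdivide has_real_derivative_powr)
    then show "((\<lambda>z. z powr (1 - b) / (1 - b)) has_vector_derivative x powr (-b))
        (at x within {min a 1..max a 1})"
      using assms by (simp add: has_real_derivative_iff_has_vector_derivative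
          has_vector_derivative_at_within)
  qed
  also have "\<dots> = (a powr (1 - b) - 1) / (b - 1)"
    using assms by (simp add: field_simps)
  finally show ?thesis .
qed

lemma dist_le_gdist:
  assumes "x \<in> S2" "y \<in> S2"
  shows "dist x y \<le> gdist x y"
proof -
  have nx: "norm x = 1" and ny: "norm y = 1"
    using assms by (auto simp: S2_def)
  define c where "c = x \<bullet> y"
  have c: "\<bar>c\<bar> \<le> 1"
    unfolding c_def using Cauchy_Schwarz_ineq2[of x y] nx ny by simp
  define t where "t = arccos c"
  have "gdist x y = t"
    using c unfolding gdist_def c_def t_def by simp
  have "0 \<le> t" "cos t = c"
    using c unfolding t_def by (auto intro: arccos_lbound cos_arccos)
  have "(dist x y)\<^sup>2 = x \<bullet> x - 2 * (x \<bullet> y) + y \<bullet> y"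
    by (simp add: dist_norm power2_norm_eq_inner inner_diff inner_commute)
  also have "\<dots> = 2 - 2 * cos t"
    using nx ny \<open>cos t = c\<close> by (simp add: c_def flip: power2_norm_eq_inner)
  also have "\<dots> = 4 * (sin (t/2))\<^sup>2"
    using cos_double_sin[of "t/2"] by simp
  also have "\<dots> \<le> 4 * (t/2)\<^sup>2"
    using abs_sin_x_le_abs_x[of "t/2"] by (simp add: abs_le_square_iff[symmetric])
  also have "\<dots> = t\<^sup>2"
    by (simp add: power2_eq_square)
  finally show ?thesis
    using \<open>0 \<le> t\<close> \<open>gdist x y = t\<close> by (meson power2_le_imp_le)
qed

lemma measure_pair_measure_Times:
  assumes "prob_space M" "prob_space N" "A \<in> sets M" "B \<in> sets N"
  shows "measure (M \<Otimes>\<^sub>M N) (A \<times> B) = measure M A * measure N B"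
proof -
  interpret N: prob_space N by fact
  show ?thesis
    using N.emeasure_pair_measure_Times[OF assms(3,4)]
    by (simp add: measure_def enn2real_mult)
qed

definition unit_interval :: "real measure" where
  "unit_interval = restrict_space lborel {0..1}"

lemma prob_space_unit_interval: "prob_space unit_interval"
  unfolding unit_interval_def
  by (rule prob_spaceI) (simp add: space_restrict_space emeasure_restrict_space)

lemma space_unit_interval [simp]: "space unit_interval = {0..1}"
  unfolding unit_interval_def by (simp add: space_restrict_space)

lemma measurable_id_unit_interval [measurable]: "(\<lambda>x. x) \<in> borel_measurable unit_interval"
  unfolding unit_interval_def by (rule measurable_restrict_space1) simp

lemma Icc_in_sets_unit_interval: "{0..1} \<inter> {a..b} \<in> sets unit_interval"
  unfolding unit_interval_def sets_restrict_space by auto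

lemma measure_unit_interval_Icc_le:
  assumes "a \<le> b"
  shows "measure unit_interval ({0..1} \<inter> {a..b}) \<le> b - a"
proof -
  have "measure unit_interval ({0..1} \<inter> {a..b}) = measure lborel ({0..1} \<inter> {a..b})"
    unfolding unit_interval_def by (subst measure_restrict_space) auto
  also have "\<dots> \<le> measure lborel {a..b}"
    using assms by (intro measure_mono_fmeasurable) (simp_all add: fmeasurable_def)
  finally show ?thesis
    using assms by simp
qed

lemma measure_unit_interval_Icc: "0 \<le> a \<Longrightarrow> a \<le> 1 \<Longrightarrow> measure unit_interval {0..a} = a"
  unfolding unit_interval_def by (subst measure_restrict_space) auto

lemma integral_unit_interval:
  fixes f :: "real \<Rightarrow> real"
  shows "integral\<^sup>L unit_interval f = (LBINT v:{0..1}. f v)"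
  unfolding unit_interval_def set_lebesgue_integral_def
  by (rule integral_restrict_space) simp

definition sphere_chart :: "real \<Rightarrow> real \<times> real \<Rightarrow> real^3" where
  "sphere_chart g z =
     vector [sqrt (1 - (snd z / 2)\<^sup>2 - (fst z powr g / 2)\<^sup>2), snd z / 2, fst z powr g / 2]"

definition chart_measure :: "real \<Rightarrow> (real^3) measure" where
  "chart_measure g =
     distr (unit_interval \<Otimes>\<^sub>M unit_interval) (restrict_space borel S2) (sphere_chart g)"

lemma sphere_chart_in_S2:
  assumes "0 \<le> g" "z \<in> {0..1} \<times> {0..1}"
  shows "sphere_chart g z \<in> S2"
proof -
  obtain v u where z: "z = (v, u)" "0 \<le> v" "v \<le> 1" "0 \<le> u" "u \<le> 1"
    using assms(2) by auto
  have "v powr g \<le> 1"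
    using z assms by (intro powr_le1) auto
  then have "(v powr g / 2)\<^sup>2 \<le> 1/4" "(u / 2)\<^sup>2 \<le> 1/4"
    using z by (auto simp: power_divide power_le_one)
  then show ?thesis
    unfolding S2_def sphere_chart_def z
    by (simp add: norm_vec_def L2_set_def sum_3)
qed

lemma sphere_chart_measurable:
  assumes "0 \<le> g"
  shows "sphere_chart g \<in> measurable (unit_interval \<Otimes>\<^sub>M unit_interval) (restrict_space borel S2)"
proof (rule measurable_restrict_space2)
  have "sphere_chart g = (\<lambda>z. sqrt (1 - (snd z / 2)\<^sup>2 - (fst z powr g / 2)\<^sup>2) *\<^sub>R vector [1, 0, 0]
      + (snd z / 2) *\<^sub>R vector [0, 1, 0] + (fst z powr g / 2) *\<^sub>R (vector [0, 0, 1] :: real^3))"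
    by (auto simp: sphere_chart_def vec_eq_iff forall_3)
  then show "sphere_chart g \<in> borel_measurable (unit_interval \<Otimes>\<^sub>M unit_interval)"
    by simp
  show "sphere_chart g \<in> space (unit_interval \<Otimes>\<^sub>M unit_interval) \<rightarrow> S2"
    using assms by (auto simp: space_pair_measure sphere_chart_in_S2)
qed

lemma borel_prob_on_S2_chart_measure: "0 \<le> g \<Longrightarrow> borel_prob_on_S2 (chart_measure g)"
  unfolding borel_prob_on_S2_def chart_measure_def
  by (auto intro!: prob_space.prob_space_distr prob_space_pair prob_space_unit_interval
      sphere_chart_measurable)

lemma measure_chart_measure_gball_le:
  assumes g: "1 \<le> g" and x: "x \<in> S2" and r: "0 < r"
  shows "measure (chart_measure g) (gball x r) \<le> (4 * r) powr (1 + 1/g)"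
proof (cases "gball x r \<in> sets (chart_measure g)")
  case False
  then show ?thesis by (simp add: measure_notin_sets)
next
  case True
  let ?M = "unit_interval \<Otimes>\<^sub>M unit_interval"
  interpret M: prob_space ?M
    by (intro prob_space_pair prob_space_unit_interval)
  define s where "s = max 0 (2 * x$3 - 2 * r)"
  define A where "A = {0..1} \<inter> {s powr (1/g) .. s powr (1/g) + (4 * r) powr (1/g)}"
  define B where "B = {0..1} \<inter> {2 * x$2 - 2 * r .. 2 * x$2 + 2 * r}"
  have AB: "A \<in> sets unit_interval" "B \<in> sets unit_interval"
    unfolding A_def B_def by (rule Icc_in_sets_unit_interval)+
  have "sphere_chart g -` gball x r \<inter> space ?M \<subseteq> A \<times> B"
  proof safe
    fix v u assume vu: "(v, u) \<in> space ?M" "sphere_chart g (v, u) \<in> gball x r"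
    then have v: "0 \<le> v" "v \<le> 1" and u: "0 \<le> u" "u \<le> 1"
      by (auto simp: space_pair_measure)
    have "sphere_chart g (v, u) \<in> S2"
      using g v u by (intro sphere_chart_in_S2) auto
    then have "norm (x - sphere_chart g (v, u)) < r"
      using vu dist_le_gdist[OF x] by (fastforce simp: gball_def dist_norm)
    then have "\<bar>x$2 - u/2\<bar> < r" "\<bar>x$3 - v powr g / 2\<bar> < r"
      using component_le_norm_cart[of "x - sphere_chart g (v, u)" 2]
        component_le_norm_cart[of "x - sphere_chart g (v, u)" 3]
      by (auto simp: sphere_chart_def)
    moreover have "(v powr g) powr (1/g) = v"
      using g v by (simp add: powr_powr)
    ultimately have "v \<in> {s powr (1/g) .. s powr (1/g) + (4 * r) powr (1/g)}"
      using powr_in_interval_add[of s "v powr g" "4 * r" "1/g"] g r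
      unfolding s_def by auto
    then show "v \<in> A"
      using v unfolding A_def by auto
    show "u \<in> B"
      using u \<open>\<bar>x$2 - u/2\<bar> < r\<close> unfolding B_def by auto
  qed
  then have "measure (chart_measure g) (gball x r) \<le> measure ?M (A \<times> B)"
    using True AB g sphere_chart_measurable[of g]
    by (auto simp: chart_measure_def measure_distr intro!: M.finite_measure_mono)
  also have "\<dots> = measure unit_interval A * measure unit_interval B"
    using AB by (intro measure_pair_measure_Times prob_space_unit_interval)
  also have "\<dots> \<le> (4 * r) powr (1/g) * (4 * r)"
  proof (rule mult_mono)
    show "measure unit_interval A \<le> (4 * r) powr (1/g)"
      using measure_unit_interval_Icc_le[of "s powr (1/g)" "s powr (1/g) + (4 * r) powr (1/g)"]
      unfolding A_def by simp
    show "measure unit_interval B \<le> 4 * r"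
      using measure_unit_interval_Icc_le[of "2 * x$2 - 2 * r" "2 * x$2 + 2 * r"] r
      unfolding B_def by simp
  qed auto
  also have "\<dots> = (4 * r) powr (1 + 1/g)"
    using r by (simp add: powr_add)
  finally show ?thesis .
qed

lemma norm_H_powr:
  assumes "y \<in> S2" "1 \<le> k" "0 < p"
  shows "norm (H k y) powr p = real k powr (p/4) * (1 - (y$3)\<^sup>2) powr (real k * p / 2)"
proof -
  have "sqrt ((y$1)\<^sup>2 + (y$2)\<^sup>2 + (y$3)\<^sup>2) = 1"
    using assms by (simp add: S2_def norm_vec_def L2_set_def sum_3 add.assoc)
  then have w: "(y$1)\<^sup>2 + (y$2)\<^sup>2 = 1 - (y$3)\<^sup>2" by simp
  have "norm (Complex (y$1) (y$2)) ^ k = (1 - (y$3)\<^sup>2) powr (real k / 2)"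
  proof (cases "1 - (y$3)\<^sup>2 = 0")
    case False
    then have "0 < 1 - (y$3)\<^sup>2"
      using w sum_power2_ge_zero[of "y$1" "y$2"] by (simp add: less_le)
    then show ?thesis
      by (simp add: complex_norm w powr_half_sqrt[symmetric] powr_powr flip: powr_realpow)
  qed (use assms(2) w in \<open>simp add: complex_norm\<close>)
  then have "norm (H k y) = real k powr (1/4) * (1 - (y$3)\<^sup>2) powr (real k / 2)"
    by (simp add: H_def norm_mult norm_power)
  then show ?thesis
    by (simp add: powr_mult powr_powr)
qed

text \<open>In chart coordinates \<open>x\<^sub>3\<^sup>2 = v\<^sup>2\<^sup>g/4\<close>, so \<open>|H\<^sub>k|\<^sup>p = k\<^sup>p\<^sup>/\<^sup>4 \<cdot> chart_profile g (kp/2) v\<close>.\<close>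
definition chart_profile :: "real \<Rightarrow> real \<Rightarrow> real \<Rightarrow> real" where
  "chart_profile g m v = (1 - v powr (2 * g) / 4) powr m"

lemma integral_H_chart_measure:
  assumes "0 \<le> g" "1 \<le> k" "0 < p"
  shows "(\<integral>y. norm (H k y) powr p \<partial>chart_measure g)
       = real k powr (p/4) * (\<integral>v. chart_profile g (real k * p / 2) v \<partial>unit_interval)"
proof -
  let ?M = "unit_interval \<Otimes>\<^sub>M unit_interval"
  interpret unit_interval: prob_space unit_interval
    by (rule prob_space_unit_interval)
  have [measurable]: "(\<lambda>y. norm (H k y) powr p) \<in> borel_measurable (restrict_space borel S2)"
    by (rule measurable_restrict_space1) (simp add: H_def Complex_eq)
  have "(\<integral>y. norm (H k y) powr p \<partial>chart_measure g)
      = (\<integral>z. norm (H k (sphere_chart g z)) powr p \<partial>?M)"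
    unfolding chart_measure_def using sphere_chart_measurable[OF assms(1)]
    by (intro integral_distr) auto
  also have "\<dots> = (\<integral>z. real k powr (p/4) * chart_profile g (real k * p / 2) (fst z) \<partial>?M)"
  proof (rule Bochner_Integration.integral_cong[OF refl])
    fix z assume "z \<in> space ?M"
    then have "sphere_chart g z \<in> S2" "(fst z powr g)\<^sup>2 = fst z powr (2 * g)"
      using assms by (auto simp: space_pair_measure sphere_chart_in_S2 power2_eq_square
          simp flip: powr_add)
    then show "norm (H k (sphere_chart g z)) powr p
        = real k powr (p/4) * chart_profile g (real k * p / 2) (fst z)"
      using assms by (simp add: norm_H_powr chart_profile_def sphere_chart_def power_divide)
  qed
  also have "\<dots> = real k powr (p/4) * (\<integral>z. chart_profile g (real k * p / 2) (fst z) \<partial>?M)"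
    by simp
  also have "(\<integral>z. chart_profile g (real k * p / 2) (fst z) \<partial>?M)
      = (\<integral>v. chart_profile g (real k * p / 2) v \<partial>distr ?M unit_interval fst)"
    by (rule integral_distr[symmetric]) (auto simp: chart_profile_def)
  also have "distr ?M unit_interval fst = unit_interval"
    by (rule unit_interval.distr_pair_fst)
  finally show ?thesis .
qed

lemma chart_profile_nonneg: "0 \<le> chart_profile g m v"
  by (simp add: chart_profile_def)

lemma chart_profile_le_one:
  assumes "0 \<le> g" "0 \<le> m" "0 \<le> v" "v \<le> 1"
  shows "chart_profile g m v \<le> 1"
  unfolding chart_profile_def using assms powr_le1[of "2 * g" v]
  by (intro powr_le1) auto

lemma exp_neg_half_le_chart_profile:
  assumes "0 < g" "1 \<le> m" "0 \<le> v" "v \<le> m powr (-1/(2 * g))"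
  shows "exp (-1/2) \<le> chart_profile g m v"
proof -
  have "v powr (2 * g) \<le> (m powr (-1/(2 * g))) powr (2 * g)"
    using assms by (intro powr_mono2) auto
  also have "\<dots> = m powr (-1)"
    using assms by (simp add: powr_powr)
  also have "\<dots> = inverse m"
    using assms by (simp add: powr_minus)
  finally have "m * v powr (2 * g) \<le> m * inverse m"
    using assms by (intro mult_left_mono) auto
  then have "m * (v powr (2 * g) / 4) \<le> 1/4"
    using assms by simp
  then show ?thesis
    unfolding chart_profile_def using assms by (intro exp_neg_half_le_one_minus_powr) auto
qed

lemma chart_profile_le_powr:
  assumes "0 < g" "0 < m" "0 < v" "v \<le> 1"
  shows "chart_profile g m v \<le> 4 / m * v powr (-(2 * g))"
proof -
  have "v powr (2 * g) \<le> 1"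
    using assms by (intro powr_le1) auto
  then have "chart_profile g m v \<le> 1 / (m * (v powr (2 * g) / 4))"
    unfolding chart_profile_def using assms by (intro one_minus_powr_le_inverse) auto
  also have "\<dots> = 4 / m * v powr (-(2 * g))"
    using assms by (simp add: powr_minus field_simps)
  finally show ?thesis .
qed

lemma integrable_chart_profile:
  assumes "0 \<le> g" "0 \<le> m"
  shows "integrable unit_interval (chart_profile g m)"
proof (rule finite_measure.integrable_const_bound[where B = 1])
  show "finite_measure unit_interval"
    using prob_space_unit_interval by (rule prob_space.finite_measure)
  show "AE v in unit_interval. norm (chart_profile g m v) \<le> 1"
    using chart_profile_le_one[OF assms] chart_profile_nonneg[of g m] by (intro AE_I2) auto
  show "chart_profile g m \<in> borel_measurable unit_interval"
    unfolding chart_profile_def by measurable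
qed

lemma integral_chart_profile_ge:
  assumes "0 < g" "1 \<le> m"
  shows "exp (-1/2) * m powr (-1/(2 * g)) \<le> (\<integral>v. chart_profile g m v \<partial>unit_interval)"
proof -
  interpret unit_interval: prob_space unit_interval
    by (rule prob_space_unit_interval)
  define a where "a = m powr (-1/(2 * g))"
  have "0 < a" "a \<le> 1"
    unfolding a_def using assms powr_mono[of "-1/(2 * g)" 0 m] by auto
  then have "{0..a} \<in> sets unit_interval"
    using Icc_in_sets_unit_interval[of 0 a] by (simp add: Int_absorb1)
  have "exp (-1/2) * a = (\<integral>v. exp (-1/2) * indicator {0..a} v \<partial>unit_interval)"
    using \<open>0 < a\<close> \<open>a \<le> 1\<close> by (simp add: measure_unit_interval_Icc Int_absorb2)
  also have "\<dots> \<le> (\<integral>v. chart_profile g m v \<partial>unit_interval)"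
  proof (rule integral_mono)
    show "integrable unit_interval (\<lambda>v. exp (-1/2) * indicator {0..a} v :: real)"
      using \<open>{0..a} \<in> sets unit_interval\<close>
      by (intro integrable_mult_right integrable_real_indicator) (auto simp: less_top[symmetric])
    show "integrable unit_interval (chart_profile g m)"
      using assms by (intro integrable_chart_profile) auto
    show "exp (-1/2) * indicator {0..a} v \<le> chart_profile g m v" for v
      using exp_neg_half_le_chart_profile[OF assms, of v] chart_profile_nonneg[of g m v]
      by (cases "v \<in> {0..a}") (auto simp: a_def)
  qed
  finally show ?thesis
    unfolding a_def .
qed

lemma integrable_indicator_powr_unit_interval:
  assumes "0 < a" "0 \<le> b"
  shows "integrable unit_interval (\<lambda>v. indicator {a..1} v * v powr (-b))"
proof (rule finite_measure.integrable_const_bound[where B = "a powr (-b)"])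
  show "finite_measure unit_interval"
    using prob_space_unit_interval by (rule prob_space.finite_measure)
  show "AE v in unit_interval. norm (indicator {a..1} v * v powr (-b)) \<le> a powr (-b)"
  proof (rule AE_I2)
    fix v
    have "v powr (-b) \<le> a powr (-b)" if "a \<le> v"
      using assms that by (intro powr_mono2') auto
    then show "norm (indicator {a..1} v * v powr (-b)) \<le> a powr (-b)"
      by (auto simp: indicator_def)
  qed
qed measurable

lemma integral_indicator_powr_unit_interval:
  assumes "0 < a" "a \<le> 1" "b \<noteq> 1"
  shows "(\<integral>v. indicator {a..1} v * v powr (-b) \<partial>unit_interval) = (a powr (1 - b) - 1) / (b - 1)"
proof -
  have "(\<integral>v. indicator {a..1} v * v powr (-b) \<partial>unit_interval) = (LBINT v:{a..1}. v powr (-b))"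
    unfolding integral_unit_interval set_lebesgue_integral_def using assms
    by (intro Bochner_Integration.integral_cong) (auto simp: indicator_def)
  then show ?thesis
    using assms set_integral_powr_neg_Icc by simp
qed

lemma integral_chart_profile_le:
  assumes "1/2 < g" "1 \<le> m"
  shows "(\<integral>v. chart_profile g m v \<partial>unit_interval) \<le> (1 + 4 / (2 * g - 1)) * m powr (-1/(2 * g))"
proof -
  interpret unit_interval: prob_space unit_interval
    by (rule prob_space_unit_interval)
  define a where "a = m powr (-1/(2 * g))"
  define tail where "tail v = indicator {a..1} v * v powr (-(2 * g))" for v :: real
  have "0 < a" "a \<le> 1"
    unfolding a_def using assms powr_mono[of "-1/(2 * g)" 0 m] by auto
  have "a powr (1 - 2 * g) = a * a powr (-(2 * g))"
    using \<open>0 < a\<close> by (simp add: powr_mult_base)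
  also have "a powr (-(2 * g)) = m"
    unfolding a_def using assms by (simp add: powr_powr)
  finally have tail_integral: "(\<integral>v. tail v \<partial>unit_interval) = (a * m - 1) / (2 * g - 1)"
    unfolding tail_def using assms \<open>0 < a\<close> \<open>a \<le> 1\<close>
    by (simp add: integral_indicator_powr_unit_interval)
  have "integrable unit_interval tail"
    unfolding tail_def using assms \<open>0 < a\<close> by (intro integrable_indicator_powr_unit_interval) auto
  have "{0..a} \<in> sets unit_interval"
    using Icc_in_sets_unit_interval[of 0 a] \<open>a \<le> 1\<close> by (simp add: Int_absorb1)
  have "(\<integral>v. chart_profile g m v \<partial>unit_interval)
      \<le> (\<integral>v. indicator {0..a} v + 4 / m * tail v \<partial>unit_interval)"
  proof (rule integral_mono)
    show "integrable unit_interval (chart_profile g m)"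
      using assms by (intro integrable_chart_profile) auto
    show "integrable unit_interval (\<lambda>v. indicator {0..a} v + 4 / m * tail v)"
      using \<open>{0..a} \<in> sets unit_interval\<close> \<open>integrable unit_interval tail\<close>
      by (intro Bochner_Integration.integrable_add integrable_mult_right integrable_real_indicator)
        (auto simp: less_top[symmetric])
    fix v assume "v \<in> space unit_interval"
    then have "0 \<le> v" "v \<le> 1" by auto
    show "chart_profile g m v \<le> indicator {0..a} v + 4 / m * tail v"
    proof (cases "v \<le> a")
      case True
      moreover have "0 \<le> 4 / m * tail v"
        using assms by (simp add: tail_def)
      ultimately show ?thesis
        using chart_profile_le_one[of g m v] assms \<open>0 \<le> v\<close> \<open>v \<le> 1\<close> by simp
    next
      case False
      then show ?thesis
        using chart_profile_le_powr[of g m v] assms \<open>0 < a\<close> \<open>v \<le> 1\<close>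
        by (simp add: tail_def)
    qed
  qed
  also have "\<dots> = a + 4 / m * ((a * m - 1) / (2 * g - 1))"
    using \<open>{0..a} \<in> sets unit_interval\<close> \<open>integrable unit_interval tail\<close> \<open>0 < a\<close> \<open>a \<le> 1\<close>
    by (simp add: tail_integral measure_unit_interval_Icc Int_absorb2 less_top[symmetric])
  also have "\<dots> \<le> (1 + 4 / (2 * g - 1)) * a"
    using assms by (simp add: field_simps)
  finally show ?thesis
    unfolding a_def .
qed

lemma Lp_norm_H_chart_measure_bounds:
  assumes "1/2 < g" "2 \<le> p" "1 \<le> k"
  defines "c\<^sub>1 \<equiv> exp (-1/2) powr (1/p) * (p/2) powr (-1/(2 * g * p))"
    and "c\<^sub>2 \<equiv> (1 + 4 / (2 * g - 1)) powr (1/p) * (p/2) powr (-1/(2 * g * p))"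
  shows "c\<^sub>1 * real k powr (1/4 - 1/(2 * g * p)) \<le> Lp_norm (chart_measure g) p (H k)"
    and "Lp_norm (chart_measure g) p (H k) \<le> c\<^sub>2 * real k powr (1/4 - 1/(2 * g * p))"
proof -
  define m where "m = real k * p / 2"
  have "1 \<le> m"
    unfolding m_def using assms mult_mono[of 1 "real k" 1 "p/2"] by simp
  define I where "I = (\<integral>v. chart_profile g m v \<partial>unit_interval)"
  define X where "X = real k powr (p/4) * m powr (-1/(2 * g))"
  have "0 \<le> X"
    by (simp add: X_def)
  have Lp_eq: "Lp_norm (chart_measure g) p (H k) = (real k powr (p/4) * I) powr (1/p)"
    unfolding Lp_norm_def I_def m_def using assms by (simp add: integral_H_chart_measure)
  have lower: "exp (-1/2) * X \<le> real k powr (p/4) * I"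
    and upper: "real k powr (p/4) * I \<le> (1 + 4 / (2 * g - 1)) * X"
    using integral_chart_profile_ge[of g m] integral_chart_profile_le[of g m] \<open>1 \<le> m\<close> assms
    by (auto simp: X_def I_def mult.left_commute)
  moreover have "0 \<le> real k powr (p/4) * I"
    using lower \<open>0 \<le> X\<close> by (meson order.trans exp_ge_zero mult_nonneg_nonneg)
  ultimately have "(exp (-1/2) * X) powr (1/p) \<le> (real k powr (p/4) * I) powr (1/p)"
    and "(real k powr (p/4) * I) powr (1/p) \<le> ((1 + 4 / (2 * g - 1)) * X) powr (1/p)"
    using assms \<open>0 \<le> X\<close> by (auto intro!: powr_mono2)
  moreover have "X powr (1/p) = (p/2) powr (-1/(2 * g * p)) * real k powr (1/4 - 1/(2 * g * p))"
  proof -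
    have "m powr (-1/(2 * g)) = real k powr (-1/(2 * g)) * (p/2) powr (-1/(2 * g))"
      unfolding m_def using assms by (simp add: powr_mult flip: times_divide_eq_right)
    then have "X = real k powr (p/4 + -1/(2 * g)) * (p/2) powr (-1/(2 * g))"
      unfolding X_def by (simp only: powr_add mult.assoc)
    then have "X powr (1/p) = real k powr ((p/4 + -1/(2 * g)) / p) * (p/2) powr (-1/(2 * g) / p)"
      by (simp add: powr_mult powr_powr)
    moreover have "(p/4 + -1/(2 * g)) / p = 1/4 - 1/(2 * g * p)" "-1/(2 * g) / p = -1/(2 * g * p)"
      using assms by (auto simp: field_simps)
    ultimately show ?thesis
      by simp
  qed
  moreover have "0 < 1 + 4 / (2 * g - 1)"
    using assms by (simp add: add_pos_nonneg)
  ultimately show "c\<^sub>1 * real k powr (1/4 - 1/(2 * g * p)) \<le> Lp_norm (chart_measure g) p (H k)"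
    and "Lp_norm (chart_measure g) p (H k) \<le> c\<^sub>2 * real k powr (1/4 - 1/(2 * g * p))"
    unfolding Lp_eq c\<^sub>1_def c\<^sub>2_def using \<open>0 \<le> X\<close> by (simp_all add: powr_mult mult_ac)
qed

theorem proposition6p1:
  fixes \<alpha> :: real
  assumes "1 < \<alpha>" and "\<alpha> < 2"
  shows "\<exists>\<mu> (ks :: nat \<Rightarrow> nat). alpha_dimensional \<mu> \<alpha> \<and> strict_mono ks \<and>
    (\<forall>p::real. p \<ge> 2 \<longrightarrow> (\<exists>C>0. \<forall>n.
       inverse C * real (ks n) powr (1/4 - (\<alpha> - 1) / (2 * p)) \<le> Lp_norm \<mu> p (H (ks n)) \<and>
       Lp_norm \<mu> p (H (ks n)) \<le> C * real (ks n) powr (1/4 - (\<alpha> - 1) / (2 * p))))"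
proof -
  define g where "g = 1 / (\<alpha> - 1)"
  have g: "1 \<le> g" "1/2 < g" "1 + 1/g = \<alpha>" "\<And>p. 1 / (2 * g * p) = (\<alpha> - 1) / (2 * p)"
    using assms by (auto simp: g_def field_simps)
  have "alpha_dimensional (chart_measure g) \<alpha>"
    unfolding alpha_dimensional_def
  proof (intro conjI exI[of _ "4 powr \<alpha>"] ballI allI impI)
    show "borel_prob_on_S2 (chart_measure g)"
      using g by (intro borel_prob_on_S2_chart_measure) auto
    show "measure (chart_measure g) (gball x r) \<le> 4 powr \<alpha> * r powr \<alpha>"
      if "x \<in> S2" "0 < r \<and> r < pi" for x r
      using measure_chart_measure_gball_le[of g x r] g that by (simp add: powr_mult)
  qed simp
  moreover have "\<exists>C>0. \<forall>n. inverse C * real (Suc n) powr (1/4 - (\<alpha> - 1) / (2 * p))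
      \<le> Lp_norm (chart_measure g) p (H (Suc n)) \<and>
      Lp_norm (chart_measure g) p (H (Suc n)) \<le> C * real (Suc n) powr (1/4 - (\<alpha> - 1) / (2 * p))"
    if "2 \<le> p" for p
  proof (rule ex_two_sided_bound)
    show "0 < exp (-1/2) powr (1/p) * (p/2) powr (-1/(2 * g * p))"
      using that by simp
  qed ((rule Lp_norm_H_chart_measure_bounds[OF g(2) that, unfolded g(4)], simp)+, simp)
  ultimately show ?thesis
    using strict_mono_Suc_iff by blast
qed

end
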